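(* In the Rustichini setting, let $\epsilon>0$ and $\mathcal G\subset\mathcal F$, let $\Pi=\{\pi\in\Delta_k:\operatorname{dist}_1(\pi,\mathcal N(F))\ge\epsilon\text{ for all nonempty }F\in\mathcal G\}$, and assume $U=\bigcup_{F\in\mathcal F\setminus\mathcal G}F$ is nonempty. Define $f,g:\mathcal K\to[0,\infty]$ by $f(x)=\inf_{\pi\in\Pi}\Delta(\pi,x)$ (with $\inf\emptyset=+\infty$) and $g(x)=\operatorname{dist}_1(x,U)$. Then there is a constant $c_\epsilon>0$, depending only on the game, $\epsilon$ and $\mathcal G$, such that $f(x)\ge c_\epsilon\, g(x)$ for all $x\in\mathcal K$.
   Context: Rustichini setting: a $k$-action partial monitoring game with finite latent space $\mathcal Z$, loss $\mathcal L:[k]\times\mathcal Z\to[0,1]$, signal $\mathcal S:[k]\times\mathcal Z\to\Sigma$; $\mathcal K$ = probability simplex on $\mathcal Z$; $\Delta_k$ = probability simplex on $[k]$; $\mathcal L(\pi,x)=\sum_{a,z}\pi(a)x(z)\mathcal L(a,z)$; $\mathcal S(a,x)$ = law of $\mathcal S(a,z)$, $z\sim x$; $x\,\mathrm R\,y$ iff $\mathcal S(a,x)=\mathcal S(a,y)$ for all $a$; $\mathcal V(\pi,x)=\sup_{y\,\mathrm R\,x}\mathcal L(\pi,y)$; $\mathcal V_\star(x)=\min_{\pi\in\Delta_k}\mathcal V(\pi,x)$; $\Delta(\pi,x)=\mathcal V(\pi,x)-\mathcal V_\star(x)$. $m$ is the smallest integer with $\mathcal V_\star(x)=\min_{\alpha\in[m]}\mathcal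 V^m(x)_\alpha$ for some linear $\mathcal V^m:\mathcal K\to\mathbb R^m$; cells $P_\alpha=\{x\in\mathcal K:\mathcal V_\star(x)=\mathcal V^m(x)_\alpha\}$; $\mathcal F=\bigcup_{\alpha\in[m]}\operatorname{faces}(P_\alpha)$. $\mathcal N(x)=\{\pi\in\Delta_k:\Delta(\pi,x)=0\}$; for nonempty $F\in\mathcal F$, $\mathcal N(F)=\mathcal N(x)$ for any $x$ in the relative interior of $F$ (independent of the choice). $\operatorname{dist}_1(x,C)=\inf_{y\in C}\|x-y\|_1$. *)

theory Defs
  imports "HOL-Analysis.Analysis"
begin

text \<open>Rustichini setting. Actions are a finite type 'a (k = CARD('a)), the latent
space is a finite type 'z, signals take values in an arbitrary type 's.
Distributions are vectors in real^'a / real^'z.\<close>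

definition prob_simplex :: "(real^'n::finite) set" where
  "prob_simplex = {x. (\<forall>i. 0 \<le> x $ i) \<and> (\<Sum>i\<in>UNIV. x $ i) = 1}"

definition l1dist :: "real^'n::finite \<Rightarrow> real^'n \<Rightarrow> real" where
  "l1dist x y = (\<Sum>i\<in>UNIV. \<bar>x $ i - y $ i\<bar>)"

definition dist1 :: "real^'n::finite \<Rightarrow> (real^'n) set \<Rightarrow> real" where
  "dist1 x C = Inf (l1dist x ` C)"

definition sig_law :: "('a \<Rightarrow> 'z::finite \<Rightarrow> 's) \<Rightarrow> 'a \<Rightarrow> real^'z \<Rightarrow> 's \<Rightarrow> real" where
  "sig_law S a x = (\<lambda>\<sigma>. \<Sum>z\<in>{z. S a z = \<sigma>}. x $ z)"

definition indist :: "('a \<Rightarrow> 'z::finite \<Rightarrow> 's) \<Rightarrow> real^'z \<Rightarrow> real^'z \<Rightarrow> bool" where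
  "indist S x y \<longleftrightarrow> (\<forall>a. sig_law S a x = sig_law S a y)"

definition lossp :: "('a::finite \<Rightarrow> 'z::finite \<Rightarrow> real) \<Rightarrow> real^'a \<Rightarrow> real^'z \<Rightarrow> real" where
  "lossp L \<pi> x = (\<Sum>a\<in>UNIV. \<Sum>z\<in>UNIV. \<pi> $ a * x $ z * L a z)"

definition Vfun :: "('a::finite \<Rightarrow> 'z::finite \<Rightarrow> real) \<Rightarrow> ('a \<Rightarrow> 'z \<Rightarrow> 's)
    \<Rightarrow> real^'a \<Rightarrow> real^'z \<Rightarrow> real" where
  "Vfun L S \<pi> x = Sup {lossp L \<pi> y | y. y \<in> prob_simplex \<and> indist S y x}"

definition Vstar :: "('a::finite \<Rightarrow> 'z::finite \<Rightarrow> real) \<Rightarrow> ('a \<Rightarrow> 'z \<Rightarrow> 's)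
    \<Rightarrow> real^'z \<Rightarrow> real" where
  "Vstar L S x = Inf {Vfun L S \<pi> x | \<pi>. \<pi> \<in> (prob_simplex :: (real^'a) set)}"

definition Delta :: "('a::finite \<Rightarrow> 'z::finite \<Rightarrow> real) \<Rightarrow> ('a \<Rightarrow> 'z \<Rightarrow> 's)
    \<Rightarrow> real^'a \<Rightarrow> real^'z \<Rightarrow> real" where
  "Delta L S \<pi> x = Vfun L S \<pi> x - Vstar L S x"

text \<open>V^m given by linear functionals w 0, ..., w (m-1): V^m(x)_alpha = w alpha . x\<close>
definition is_rep :: "('a::finite \<Rightarrow> 'z::finite \<Rightarrow> real) \<Rightarrow> ('a \<Rightarrow> 'z \<Rightarrow> 's)
    \<Rightarrow> nat \<Rightarrow> (nat \<Rightarrow> real^'z) \<Rightarrow> bool" where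
  "is_rep L S m w \<longleftrightarrow> 1 \<le> m \<and>
     (\<forall>x\<in>prob_simplex. Vstar L S x = Min {w \<alpha> \<bullet> x | \<alpha>. \<alpha> < m})"

definition min_rep :: "('a::finite \<Rightarrow> 'z::finite \<Rightarrow> real) \<Rightarrow> ('a \<Rightarrow> 'z \<Rightarrow> 's)
    \<Rightarrow> nat \<Rightarrow> (nat \<Rightarrow> real^'z) \<Rightarrow> bool" where
  "min_rep L S m w \<longleftrightarrow> is_rep L S m w \<and>
     (\<forall>m' (w' :: nat \<Rightarrow> real^'z). is_rep L S m' w' \<longrightarrow> m \<le> m')"

definition cell :: "('a::finite \<Rightarrow> 'z::finite \<Rightarrow> real) \<Rightarrow> ('a \<Rightarrow> 'z \<Rightarrow> 's)
    \<Rightarrow> (nat \<Rightarrow> real^'z) \<Rightarrow> nat \<Rightarrow> (real^'z) set" where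
  "cell L S w \<alpha> = {x\<in>prob_simplex. Vstar L S x = w \<alpha> \<bullet> x}"

definition faces_F :: "('a::finite \<Rightarrow> 'z::finite \<Rightarrow> real) \<Rightarrow> ('a \<Rightarrow> 'z \<Rightarrow> 's)
    \<Rightarrow> nat \<Rightarrow> (nat \<Rightarrow> real^'z) \<Rightarrow> (real^'z) set set" where
  "faces_F L S m w = {F. \<exists>\<alpha><m. F face_of cell L S w \<alpha>}"

definition Nset :: "('a::finite \<Rightarrow> 'z::finite \<Rightarrow> real) \<Rightarrow> ('a \<Rightarrow> 'z \<Rightarrow> 's)
    \<Rightarrow> real^'z \<Rightarrow> (real^'a) set" where
  "Nset L S x = {\<pi>\<in>prob_simplex. Delta L S \<pi> x = 0}"

text \<open>N(F) = N(x) for a (any) point x of the relative interior of F.\<close>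
definition NF :: "('a::finite \<Rightarrow> 'z::finite \<Rightarrow> real) \<Rightarrow> ('a \<Rightarrow> 'z \<Rightarrow> 's)
    \<Rightarrow> (real^'z) set \<Rightarrow> (real^'a) set" where
  "NF L S F = Nset L S (SOME x. x \<in> rel_interior F)"

end

theory Submission
  imports Defs
begin

text \<open>
  On every cell \<open>P\<^sub>\<alpha>\<close> the optimal value \<open>\<V>\<^sub>\<star>\<close> is linear and \<open>\<V>(\<pi>, \<cdot>)\<close> is concave (a mixture of
  indistinguishable laws is indistinguishable from the mixture), so \<open>\<Delta>(\<pi>, \<cdot>)\<close> is concave and
  nonnegative on \<open>P\<^sub>\<alpha>\<close>, while \<open>g\<close> is Lipschitz and vanishes on the faces outside \<open>\<G>\<close>.
  For a face \<open>F \<in> \<G>\<close>, continuity of \<open>\<Delta>\<close> in \<open>\<pi>\<close> and compactness of \<open>\<Pi>\<close> give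
  \<open>\<Delta>(\<pi>, x\<^sub>0) \<ge> \<delta> > 0\<close> at the relative interior point \<open>x\<^sub>0\<close> defining \<open>\<N>(F)\<close>. By induction on
  the dimension of faces, a bound \<open>c g \<le> \<Delta>\<close> on the relative boundary of \<open>F\<close> (a union of
  lower-dimensional faces) extends to \<open>F\<close>: write \<open>x\<close> on the segment from \<open>x\<^sub>0\<close> to a boundary
  point \<open>z\<close> and use concavity.  Finitely many faces and cells give a uniform constant.
\<close>

section \<open>Lower bounds for concave functions on polytopes\<close>

lemma concave_on_subset: "concave_on T f \<Longrightarrow> S \<subseteq> T \<Longrightarrow> convex S \<Longrightarrow> concave_on S f"
  unfolding concave_on_def by (rule convex_on_subset)

lemma finite_family_lower_bound:
  fixes g :: "'x \<Rightarrow> real"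
  assumes "finite A"
    and bound: "\<And>a. a \<in> A \<Longrightarrow> \<exists>c>0. \<forall>\<pi>\<in>Pol. \<forall>x\<in>B a. c * g x \<le> f \<pi> x"
    and g_nonneg: "\<And>a x. a \<in> A \<Longrightarrow> x \<in> B a \<Longrightarrow> 0 \<le> g x"
  shows "\<exists>c>0. \<forall>a\<in>A. \<forall>\<pi>\<in>Pol. \<forall>x\<in>B a. c * g x \<le> f \<pi> x"
proof -
  obtain c where c: "\<And>a. a \<in> A \<Longrightarrow> 0 < c a \<and> (\<forall>\<pi>\<in>Pol. \<forall>x\<in>B a. c a * g x \<le> f \<pi> x)"
    using bound by metis
  define c0 where "c0 = Min (insert 1 (c ` A))"
  have "0 < c0"
    using assms(1) c by (simp add: c0_def)
  moreover have "c0 * g x \<le> f \<pi> x" if "a \<in> A" "\<pi> \<in> Pol" "x \<in> B a" for a \<pi> x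
  proof -
    have "c0 * g x \<le> c a * g x"
      using assms(1) that g_nonneg[OF that(1,3)] by (intro mult_right_mono) (simp_all add: c0_def)
    also have "\<dots> \<le> f \<pi> x"
      using c that by blast
    finally show ?thesis .
  qed
  ultimately show ?thesis
    by blast
qed

lemma continuous_on_compact_pos_lower_bound:
  fixes f :: "'a::topological_space \<Rightarrow> real"
  assumes "compact K" "continuous_on K f" "\<And>x. x \<in> K \<Longrightarrow> 0 < f x"
  shows "\<exists>\<delta>>0. \<forall>x\<in>K. \<delta> \<le> f x"
proof (cases "K = {}")
  case False
  then obtain p where "p \<in> K" "\<forall>x\<in>K. f p \<le> f x"
    using continuous_attains_inf[OF assms(1) _ assms(2)] by blast
  then show ?thesis
    using assms(3) by blast
qed (auto intro: exI[of _ 1])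

text \<open>
  Here \<open>gx\<close> and \<open>gz\<close> stand for \<open>g\<close> at \<open>x = (1 - u) x\<^sub>0 + u z\<close> and at the boundary point \<open>z\<close>,
  \<open>D\<close> for the Lipschitz increment over the whole face and \<open>B\<close> for a bound on \<open>g\<close>: near \<open>x\<^sub>0\<close>
  the term \<open>(1 - u) \<delta>\<close> pays for \<open>c gx\<close>, near \<open>z\<close> the term \<open>u c' gz\<close> does.
\<close>
lemma interpolation_inequality:
  fixes u c c' \<delta> B D gx gz :: real
  assumes u: "0 \<le> u" "u \<le> 1" and gz: "0 \<le> gz" and "0 < c'" and D: "0 \<le> D" "D \<le> B"
    and gx: "gx \<le> gz + (1 - u) * D" "gx \<le> B"
    and c: "0 < c" "c \<le> c' / 2" "c * (2 * B + 1) \<le> \<delta>"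
  shows "c * gx \<le> (1 - u) * \<delta> + u * (c' * gz)"
proof -
  have cB: "c * B \<le> \<delta> / 2"
    using c(1,3) by (simp add: algebra_simps)
  show ?thesis
  proof (cases "u < 1 / 2")
    case True
    have "c * gx \<le> c * B"
      using gx(2) c(1) by (simp add: mult_left_mono)
    moreover have "\<delta> / 2 \<le> (1 - u) * \<delta>"
      using mult_right_mono[of "1 / 2" "1 - u" \<delta>] True cB D c(1) mult_nonneg_nonneg[of c B]
      by linarith
    moreover have "0 \<le> u * (c' * gz)"
      using u(1) \<open>0 < c'\<close> gz by simp
    ultimately show ?thesis
      using cB by linarith
  next
    case False
    have "c * gx \<le> c * (gz + (1 - u) * D)"
      using gx(1) c(1) by (simp add: mult_left_mono)
    also have "\<dots> = c * gz + (1 - u) * (c * D)"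
      by (simp add: algebra_simps)
    finally have "c * gx \<le> c * gz + (1 - u) * (c * D)" .
    moreover have "(1 - u) * (c * D) \<le> (1 - u) * \<delta>"
    proof -
      have "c * D \<le> c * B"
        using D(2) c(1) by (simp add: mult_left_mono)
      then have "c * D \<le> \<delta>"
        using cB D c(1) mult_nonneg_nonneg[of c B] by linarith
      then show ?thesis
        using u(2) by (simp add: mult_left_mono)
    qed
    moreover have "c * gz \<le> u * (c' * gz)"
    proof -
      have "c \<le> u * c'"
        using c(2) mult_right_mono[of "1 / 2" u c'] False \<open>0 < c'\<close> by linarith
      then show ?thesis
        using gz by (simp add: mult_right_mono mult.assoc[symmetric])
    qed
    ultimately show ?thesis
      by linarith
  qed
qed

lemma rel_frontier_segment_decomposition:
  fixes F :: "'n::euclidean_space set"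
  assumes F: "convex F" "compact F" and x0: "x0 \<in> rel_interior F" and x: "x \<in> F" "x \<noteq> x0"
  obtains z u where "z \<in> rel_frontier F" "z \<in> F" "0 \<le> u" "u \<le> 1"
    "x = (1 - u) *\<^sub>R x0 + u *\<^sub>R z" "dist x z = (1 - u) * dist x0 z"
proof -
  obtain z where z: "z \<in> rel_frontier F" "x \<in> closed_segment x0 z"
    using segment_to_rel_frontier_aux[OF F(1) compact_imp_bounded[OF F(2)] x0 x(1)] x(2) by metis
  moreover have "z \<in> F"
    using z(1) compact_imp_closed[OF F(2)] by (simp add: rel_frontier_def)
  moreover obtain u where u: "0 \<le> u" "u \<le> 1" "x = (1 - u) *\<^sub>R x0 + u *\<^sub>R z"
    using z(2) by (auto simp: closed_segment_def)
  moreover have "dist x z = (1 - u) * dist x0 z"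
  proof -
    have "x - z = (1 - u) *\<^sub>R (x0 - z)"
      using u(3) by (simp add: algebra_simps)
    then show ?thesis
      using u(2) by (simp add: dist_norm)
  qed
  ultimately show ?thesis
    using that by blast
qed

lemma concave_lower_bound_from_rel_frontier:
  fixes F :: "'n::euclidean_space set" and \<Phi> :: "'p \<Rightarrow> 'n \<Rightarrow> real"
  assumes F: "convex F" "compact F" and x0: "x0 \<in> rel_interior F"
    and concave: "\<And>\<pi>. \<pi> \<in> Pol \<Longrightarrow> concave_on F (\<Phi> \<pi>)"
    and \<delta>: "0 < \<delta>" "\<And>\<pi>. \<pi> \<in> Pol \<Longrightarrow> \<delta> \<le> \<Phi> \<pi> x0"
    and lip: "K-lipschitz_on F g" and g_nonneg: "\<And>x. x \<in> F \<Longrightarrow> 0 \<le> g x"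
    and c': "0 < c'" "\<And>\<pi> z. \<pi> \<in> Pol \<Longrightarrow> z \<in> rel_frontier F \<Longrightarrow> c' * g z \<le> \<Phi> \<pi> z"
  shows "\<exists>c>0. \<forall>\<pi>\<in>Pol. \<forall>x\<in>F. c * g x \<le> \<Phi> \<pi> x"
proof -
  have x0F: "x0 \<in> F"
    using x0 rel_interior_subset by blast
  define D where "D = K * diameter F"
  define B where "B = g x0 + D"
  have D: "0 \<le> D" "D \<le> B"
    using lipschitz_on_nonneg[OF lip] diameter_ge_0[OF compact_imp_bounded[OF F(2)]] g_nonneg[OF x0F]
    by (simp_all add: D_def B_def)
  have g_lip: "g x \<le> g y + K * dist x y" if "x \<in> F" "y \<in> F" for x y
    using lipschitz_onD[OF lip that] by (simp add: dist_real_def abs_le_iff)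
  have K_dist: "K * dist x y \<le> D" if "x \<in> F" "y \<in> F" for x y
    unfolding D_def using diameter_bounded_bound[OF compact_imp_bounded[OF F(2)] that]
    by (rule mult_left_mono) (rule lipschitz_on_nonneg[OF lip])
  have B: "g x \<le> B" if "x \<in> F" for x
    using g_lip[OF that x0F] K_dist[OF that x0F] by (simp add: B_def)
  define c where "c = min (c' / 2) (\<delta> / (2 * B + 1))"
  have B_pos: "0 < 2 * B + 1"
    using D g_nonneg[OF x0F] by linarith
  have c_le: "c \<le> c' / 2" "c \<le> \<delta> / (2 * B + 1)"
    unfolding c_def by linarith+
  have c_pos: "0 < c"
    using c'(1) \<delta>(1) B_pos by (simp add: c_def)
  have c_B: "c * (2 * B + 1) \<le> \<delta>"
    using c_le(2) B_pos by (simp add: pos_le_divide_eq)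
  have "c * g x \<le> \<Phi> \<pi> x" if \<pi>: "\<pi> \<in> Pol" and x: "x \<in> F" for \<pi> x
  proof (cases "x = x0")
    case True
    then show ?thesis
      using interpolation_inequality[of 0 "g x0" c' D B "g x0" c \<delta>] g_nonneg[OF x0F] D B[OF x0F]
        c'(1) c_pos c_le(1) c_B \<delta>(2)[OF \<pi>]
      by simp
  next
    case False
    then obtain z u where z: "z \<in> rel_frontier F" and zF: "z \<in> F"
      and u: "0 \<le> u" "u \<le> 1" "x = (1 - u) *\<^sub>R x0 + u *\<^sub>R z" "dist x z = (1 - u) * dist x0 z"
      using rel_frontier_segment_decomposition[OF F x0 x] by metis
    have "K * dist x z = (1 - u) * (K * dist x0 z)"
      using u(4) by simp
    also have "\<dots> \<le> (1 - u) * D"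
      using K_dist[OF x0F zF] u(2) by (simp add: mult_left_mono)
    finally have "g x \<le> g z + (1 - u) * D"
      using g_lip[OF x zF] by linarith
    then have "c * g x \<le> (1 - u) * \<delta> + u * (c' * g z)"
      using interpolation_inequality[OF u(1,2) g_nonneg[OF zF] c'(1) D _ B[OF x] c_pos c_le(1) c_B]
      by blast
    also have "\<dots> \<le> (1 - u) * \<Phi> \<pi> x0 + u * \<Phi> \<pi> z"
      using \<delta>(2)[OF \<pi>] c'(2)[OF \<pi> z] u by (intro add_mono mult_left_mono) auto
    also have "\<dots> \<le> \<Phi> \<pi> x"
      using concave_onD[OF concave[OF \<pi>] u(1,2) x0F zF] u(3) by simp
    finally show ?thesis .
  qed
  then show ?thesis
    using c_pos by blast
qed

lemma polytope_rel_frontier_lower_bound: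
  fixes F :: "'n::euclidean_space set" and g :: "'n \<Rightarrow> real"
  assumes F: "polytope F"
    and faces: "\<And>E. E face_of F \<Longrightarrow> E \<noteq> F \<Longrightarrow> \<exists>c>0. \<forall>\<pi>\<in>Pol. \<forall>x\<in>E. c * g x \<le> \<Phi> \<pi> x"
    and g_nonneg: "\<And>x. x \<in> F \<Longrightarrow> 0 \<le> g x"
  shows "\<exists>c>0. \<forall>\<pi>\<in>Pol. \<forall>z\<in>rel_frontier F. c * g z \<le> \<Phi> \<pi> z"
proof -
  let ?proper = "{E. E face_of F \<and> E \<noteq> F}"
  have "finite ?proper"
    by (rule finite_subset[OF _ finite_polytope_faces[OF F]]) blast
  moreover have "0 \<le> g x" if "E \<in> ?proper" "x \<in> E" for E x
    using that face_of_imp_subset g_nonneg by blast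
  ultimately obtain c where c: "0 < c" "\<forall>E\<in>?proper. \<forall>\<pi>\<in>Pol. \<forall>x\<in>E. c * g x \<le> \<Phi> \<pi> x"
    using finite_family_lower_bound[of ?proper Pol id g \<Phi>] faces by auto
  have "rel_frontier F = \<Union> ?proper"
    by (rule rel_frontier_of_polyhedron_alt[OF polytope_imp_polyhedron[OF F]])
  then show ?thesis
    using c by blast
qed

lemma polytope_concave_lower_bound:
  fixes P :: "'n::euclidean_space set" and \<Phi> :: "'p \<Rightarrow> 'n \<Rightarrow> real"
  assumes P: "polytope P"
    and concave: "\<And>\<pi>. \<pi> \<in> Pol \<Longrightarrow> concave_on P (\<Phi> \<pi>)"
    and nonneg: "\<And>\<pi> x. \<pi> \<in> Pol \<Longrightarrow> x \<in> P \<Longrightarrow> 0 \<le> \<Phi> \<pi> x"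
    and lip: "K-lipschitz_on P g" and g_nonneg: "\<And>x. x \<in> P \<Longrightarrow> 0 \<le> g x"
    and faces: "\<And>F. F face_of P \<Longrightarrow> F \<noteq> {} \<Longrightarrow> (\<forall>x\<in>F. g x = 0) \<or>
                  (\<exists>x0\<in>rel_interior F. \<exists>\<delta>>0. \<forall>\<pi>\<in>Pol. \<delta> \<le> \<Phi> \<pi> x0)"
  shows "\<exists>c>0. \<forall>\<pi>\<in>Pol. \<forall>x\<in>P. c * g x \<le> \<Phi> \<pi> x"
proof -
  let ?bound = "\<lambda>F c. \<forall>\<pi>\<in>Pol. \<forall>x\<in>F. c * g x \<le> \<Phi> \<pi> x"
  have "F face_of P \<Longrightarrow> \<exists>c>0. ?bound F c" for F
  proof (induction "nat (aff_dim F + 1)" arbitrary: F rule: less_induct)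
    case less
    have F: "polytope F" "F \<subseteq> P"
      using face_of_polytope_polytope[OF P less.prems] face_of_imp_subset[OF less.prems] by auto
    then have F_convex: "convex F" and F_compact: "compact F"
      by (simp_all add: polytope_imp_convex polytope_imp_compact)
    consider "F = {} \<or> (\<forall>x\<in>F. g x = 0)"
      | x0 \<delta> where "x0 \<in> rel_interior F" "0 < \<delta>" "\<forall>\<pi>\<in>Pol. \<delta> \<le> \<Phi> \<pi> x0"
      using faces[OF less.prems] by blast
    then show ?case
    proof cases
      case 1
      then have "?bound F 1"
        using nonneg F(2) by auto
      then show ?thesis
        by (intro exI[of _ 1]) simp
    next
      case 2
      have "\<exists>c>0. ?bound E c" if "E face_of F" "E \<noteq> F" for E
      proof (rule less.hyps)
        have "aff_dim E < aff_dim F"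
          using face_of_aff_dim_lt[OF F_convex] that by auto
        then show "nat (aff_dim E + 1) < nat (aff_dim F + 1)"
          using aff_dim_geq[of E] by linarith
        show "E face_of P"
          using that face_of_trans[OF _ less.prems] by blast
      qed
      then obtain c' where c': "0 < c'" "\<And>\<pi> z. \<pi> \<in> Pol \<Longrightarrow> z \<in> rel_frontier F \<Longrightarrow> c' * g z \<le> \<Phi> \<pi> z"
        using polytope_rel_frontier_lower_bound[OF F(1), of Pol g \<Phi>] g_nonneg F(2) by blast
      have "concave_on F (\<Phi> \<pi>)" if "\<pi> \<in> Pol" for \<pi>
        by (rule concave_on_subset[OF concave[OF that] F(2) F_convex])
      then show ?thesis
        by (rule concave_lower_bound_from_rel_frontier[OF F_convex F_compact 2(1) _ 2(2)
              _ lipschitz_on_subset[OF lip F(2)] _ c'])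
          (use 2(3) g_nonneg F(2) in auto)
    qed
  qed
  then show ?thesis
    using face_of_refl[OF polytope_imp_convex[OF P]] by blast
qed

section \<open>The probability simplex and the \<open>\<ell>\<^sub>1\<close>-distance\<close>

lemma prob_simplex_nonneg: "x \<in> prob_simplex \<Longrightarrow> 0 \<le> x $ i"
  by (simp add: prob_simplex_def)

lemma prob_simplex_sum: "x \<in> prob_simplex \<Longrightarrow> (\<Sum>i\<in>UNIV. x $ i) = 1"
  by (simp add: prob_simplex_def)

lemma polytope_prob_simplex: "polytope (prob_simplex :: (real^'n::finite) set)"
proof -
  have eq: "prob_simplex =
      (\<Inter>i. {x::real^'n. (- axis i 1) \<bullet> x \<le> 0}) \<inter> {x. (\<chi> i. 1) \<bullet> x = 1}"
    by (auto simp: prob_simplex_def inner_axis' inner_vec_def[of "\<chi> i. 1"])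
  have "polyhedron (prob_simplex :: (real^'n) set)"
    unfolding eq by (intro polyhedron_Int polyhedron_Inter polyhedron_hyperplane)
      (auto intro: polyhedron_halfspace_le polyhedron_halfspace_ge)
  moreover have "bounded (prob_simplex :: (real^'n) set)"
  proof (rule boundedI)
    fix x :: "real^'n" assume x: "x \<in> prob_simplex"
    have "norm x \<le> (\<Sum>i\<in>UNIV. \<bar>x $ i\<bar>)"
      by (rule norm_le_l1_cart)
    also have "\<dots> = 1"
      using x by (simp add: prob_simplex_def)
    finally show "norm x \<le> 1" .
  qed
  ultimately show ?thesis
    by (simp add: polytope_eq_bounded_polyhedron)
qed

lemma convex_prob_simplex: "convex prob_simplex"
  by (rule polytope_imp_convex[OF polytope_prob_simplex])

lemma compact_prob_simplex: "compact prob_simplex"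
  by (rule polytope_imp_compact[OF polytope_prob_simplex])

lemma l1dist_nonneg: "0 \<le> l1dist x y"
  by (simp add: l1dist_def sum_nonneg)

lemma l1dist_self [simp]: "l1dist x x = 0"
  by (simp add: l1dist_def)

lemma l1dist_commute: "l1dist x y = l1dist y x"
  by (simp add: l1dist_def abs_minus_commute)

lemma l1dist_triangle: "l1dist x z \<le> l1dist x y + l1dist y z"
  unfolding l1dist_def sum.distrib[symmetric] by (rule sum_mono) auto

lemma l1dist_le_card_dist: "l1dist x y \<le> real CARD('n) * dist x (y::real^'n::finite)"
proof -
  have "\<bar>x $ i - y $ i\<bar> \<le> dist x y" for i
    by (metis component_le_norm_cart dist_norm vector_minus_component)
  then have "l1dist x y \<le> (\<Sum>i\<in>(UNIV::'n set). dist x y)"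
    unfolding l1dist_def by (intro sum_mono)
  then show ?thesis
    by simp
qed

lemma dist1_le_l1dist: "y \<in> C \<Longrightarrow> dist1 x C \<le> l1dist x y"
  unfolding dist1_def by (rule cInf_lower) (auto intro: bdd_belowI2[where m=0] simp: l1dist_nonneg)

lemma dist1_nonneg: "C \<noteq> {} \<Longrightarrow> 0 \<le> dist1 x C"
  unfolding dist1_def by (rule cInf_greatest) (auto simp: l1dist_nonneg)

lemma dist1_eq_0: "x \<in> C \<Longrightarrow> dist1 x C = 0"
  using dist1_le_l1dist[of x C x] dist1_nonneg[of C x] by auto

lemma dist1_le_l1dist_plus:
  assumes "C \<noteq> {}"
  shows "dist1 x C \<le> l1dist x y + dist1 y C"
proof -
  have "dist1 x C - l1dist x y \<le> dist1 y C"
    unfolding dist1_def[of y]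
  proof (rule cInf_greatest)
    fix v assume "v \<in> l1dist y ` C"
    then obtain u where u: "u \<in> C" "v = l1dist y u"
      by auto
    have "dist1 x C \<le> l1dist x y + l1dist y u"
      using dist1_le_l1dist[OF u(1)] l1dist_triangle by (rule order_trans)
    then show "dist1 x C - l1dist x y \<le> v"
      using u(2) by simp
  qed (use assms in simp)
  then show ?thesis
    by simp
qed

lemma lipschitz_on_dist1:
  fixes C :: "(real^'n::finite) set"
  assumes "C \<noteq> {}"
  shows "(real CARD('n))-lipschitz_on UNIV (\<lambda>x. dist1 x C)"
proof (rule lipschitz_onI)
  fix x y :: "real^'n"
  have "\<bar>dist1 x C - dist1 y C\<bar> \<le> l1dist x y"
    using dist1_le_l1dist_plus[OF assms, of x y] dist1_le_l1dist_plus[OF assms, of y x]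
    by (simp add: l1dist_commute)
  then show "dist (dist1 x C) (dist1 y C) \<le> real CARD('n) * dist x y"
    using l1dist_le_card_dist[of x y] by (simp add: dist_real_def)
qed simp

lemma continuous_on_dist1: "continuous_on UNIV (\<lambda>x::real^'n::finite. dist1 x C)"
proof (cases "C = {}")
  case True
  then show ?thesis
    by (simp add: dist1_def)
next
  case False
  then show ?thesis
    by (rule lipschitz_on_continuous_on[OF lipschitz_on_dist1])
qed

section \<open>Losses, values and cells\<close>

lemma lossp_convex_comb:
  "lossp L \<pi> (u *\<^sub>R y1 + v *\<^sub>R y2) = u * lossp L \<pi> y1 + v * lossp L \<pi> y2"
  unfolding lossp_def sum_distrib_left sum.distrib[symmetric]
  by (intro sum.cong refl) (simp add: algebra_simps)

lemma indist_convex_comb: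
  "indist S y1 x1 \<Longrightarrow> indist S y2 x2 \<Longrightarrow>
    indist S (u *\<^sub>R y1 + v *\<^sub>R y2) (u *\<^sub>R x1 + v *\<^sub>R x2)"
  by (simp add: indist_def sig_law_def fun_eq_iff sum.distrib flip: sum_distrib_left)

lemma indist_refl: "indist S x x"
  by (simp add: indist_def)

lemma cell_subset_prob_simplex: "cell L S w \<alpha> \<subseteq> prob_simplex"
  by (auto simp: cell_def)

lemma is_rep_Vstar:
  assumes "is_rep L S m w" "x \<in> prob_simplex"
  shows "Vstar L S x = Min ((\<lambda>\<beta>. w \<beta> \<bullet> x) ` {..<m})"
proof -
  have "{w \<beta> \<bullet> x |\<beta>. \<beta> < m} = (\<lambda>\<beta>. w \<beta> \<bullet> x) ` {..<m}"
    by auto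
  then show ?thesis
    using assms by (simp add: is_rep_def)
qed

lemma cell_eq_halfspaces:
  assumes rep: "is_rep L S m w" and \<alpha>: "\<alpha> < m"
  shows "cell L S w \<alpha> = prob_simplex \<inter> (\<Inter>\<beta><m. {x. (w \<alpha> - w \<beta>) \<bullet> x \<le> 0})"
proof -
  have "Min ((\<lambda>\<beta>. w \<beta> \<bullet> x) ` {..<m}) = w \<alpha> \<bullet> x \<longleftrightarrow> (\<forall>\<beta><m. w \<alpha> \<bullet> x \<le> w \<beta> \<bullet> x)" for x
    using \<alpha> by (subst Min_eq_iff) auto
  then show ?thesis
    by (auto simp: cell_def is_rep_Vstar[OF rep] inner_diff_left)
qed

lemma polytope_cell:
  assumes "is_rep L S m w" "\<alpha> < m"
  shows "polytope (cell L S w \<alpha>)"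
proof -
  have "polyhedron (cell L S w \<alpha>)"
    unfolding cell_eq_halfspaces[OF assms]
    by (intro polyhedron_Int polyhedron_Inter polytope_imp_polyhedron[OF polytope_prob_simplex])
      (auto intro: polyhedron_halfspace_le)
  moreover have "bounded (cell L S w \<alpha>)"
    using polytope_imp_bounded[OF polytope_prob_simplex] cell_subset_prob_simplex
    by (rule bounded_subset)
  ultimately show ?thesis
    by (simp add: polytope_eq_bounded_polyhedron)
qed

lemma ex_cell:
  assumes rep: "is_rep L S m w" and x: "x \<in> prob_simplex"
  shows "\<exists>\<alpha><m. x \<in> cell L S w \<alpha>"
proof -
  have "0 < m"
    using rep by (simp add: is_rep_def)
  then have "{..<m} \<noteq> {}"
    by auto
  then have "Min ((\<lambda>\<beta>. w \<beta> \<bullet> x) ` {..<m}) \<in> (\<lambda>\<beta>. w \<beta> \<bullet> x) ` {..<m}"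
    by (intro Min_in) auto
  then obtain \<alpha> where "\<alpha> < m" "w \<alpha> \<bullet> x = Min ((\<lambda>\<beta>. w \<beta> \<bullet> x) ` {..<m})"
    by auto
  then show ?thesis
    using is_rep_Vstar[OF rep x] x by (auto simp: cell_def)
qed

context
  fixes L :: "'a::finite \<Rightarrow> 'z::finite \<Rightarrow> real" and S :: "'a \<Rightarrow> 'z \<Rightarrow> 's"
  assumes L01: "\<forall>a z. 0 \<le> L a z \<and> L a z \<le> 1"
begin

lemma action_loss_bounds:
  assumes "y \<in> prob_simplex"
  shows "0 \<le> (\<Sum>z\<in>UNIV. y $ z * L a z)" "(\<Sum>z\<in>UNIV. y $ z * L a z) \<le> 1"
proof -
  show "0 \<le> (\<Sum>z\<in>UNIV. y $ z * L a z)"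
    using L01 assms by (intro sum_nonneg mult_nonneg_nonneg) (auto simp: prob_simplex_nonneg)
  have "(\<Sum>z\<in>UNIV. y $ z * L a z) \<le> (\<Sum>z\<in>UNIV. y $ z)"
    using L01 assms by (intro sum_mono mult_left_le) (auto simp: prob_simplex_nonneg)
  then show "(\<Sum>z\<in>UNIV. y $ z * L a z) \<le> 1"
    using prob_simplex_sum[OF assms] by simp
qed

lemma lossp_eq_sum_action_loss: "lossp L \<pi> y = (\<Sum>a\<in>UNIV. \<pi> $ a * (\<Sum>z\<in>UNIV. y $ z * L a z))"
  by (simp add: lossp_def sum_distrib_left mult.assoc)

lemma lossp_nonneg: "\<pi> \<in> prob_simplex \<Longrightarrow> y \<in> prob_simplex \<Longrightarrow> 0 \<le> lossp L \<pi> y"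
  unfolding lossp_eq_sum_action_loss
  by (intro sum_nonneg mult_nonneg_nonneg action_loss_bounds) (auto simp: prob_simplex_nonneg)

lemma lossp_le_1:
  assumes "\<pi> \<in> prob_simplex" "y \<in> prob_simplex"
  shows "lossp L \<pi> y \<le> 1"
proof -
  have "lossp L \<pi> y \<le> (\<Sum>a\<in>UNIV. \<pi> $ a)"
    unfolding lossp_eq_sum_action_loss using assms action_loss_bounds[OF assms(2)]
    by (intro sum_mono mult_left_le) (auto simp: prob_simplex_nonneg)
  then show ?thesis
    using prob_simplex_sum[OF assms(1)] by simp
qed

lemma lossp_le_l1dist_plus:
  assumes "y \<in> prob_simplex"
  shows "lossp L \<pi> y \<le> lossp L \<pi>' y + l1dist \<pi> \<pi>'"
proof -
  have "(\<pi> $ a - \<pi>' $ a) * (\<Sum>z\<in>UNIV. y $ z * L a z) \<le> \<bar>\<pi> $ a - \<pi>' $ a\<bar>" for a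
  proof -
    have "(\<pi> $ a - \<pi>' $ a) * (\<Sum>z\<in>UNIV. y $ z * L a z)
        \<le> \<bar>\<pi> $ a - \<pi>' $ a\<bar> * (\<Sum>z\<in>UNIV. y $ z * L a z)"
      using action_loss_bounds[OF assms] by (intro mult_right_mono) auto
    also have "\<dots> \<le> \<bar>\<pi> $ a - \<pi>' $ a\<bar>"
      using action_loss_bounds[OF assms] by (intro mult_left_le) auto
    finally show ?thesis .
  qed
  then have "lossp L \<pi> y - lossp L \<pi>' y \<le> l1dist \<pi> \<pi>'"
    unfolding lossp_eq_sum_action_loss l1dist_def
    by (simp add: sum_subtractf[symmetric] left_diff_distrib sum_mono)
  then show ?thesis
    by simp
qed

lemma lossp_le_Vfun:
  "\<pi> \<in> prob_simplex \<Longrightarrow> y \<in> prob_simplex \<Longrightarrow> indist S y x \<Longrightarrow> lossp L \<pi> y \<le> Vfun L S \<pi> x"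
  unfolding Vfun_def by (rule cSup_upper) (auto intro!: bdd_aboveI[where M = 1] lossp_le_1)

lemma Vfun_le_l1dist_plus:
  assumes "\<pi>' \<in> prob_simplex" "x \<in> prob_simplex"
  shows "Vfun L S \<pi> x \<le> Vfun L S \<pi>' x + l1dist \<pi> \<pi>'"
  unfolding Vfun_def[of L S \<pi>]
proof (rule cSup_least)
  fix v assume "v \<in> {lossp L \<pi> y |y. y \<in> prob_simplex \<and> indist S y x}"
  then obtain y where y: "y \<in> prob_simplex" "indist S y x" "v = lossp L \<pi> y"
    by auto
  then show "v \<le> Vfun L S \<pi>' x + l1dist \<pi> \<pi>'"
    using lossp_le_l1dist_plus[OF y(1), of \<pi> \<pi>'] lossp_le_Vfun[OF assms(1) y(1,2)] by simp
qed (use assms(2) indist_refl in blast)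

lemma ex_indist_lossp_gt_Vfun:
  assumes "x \<in> prob_simplex" "0 < e"
  shows "\<exists>y. y \<in> prob_simplex \<and> indist S y x \<and> Vfun L S \<pi> x - e < lossp L \<pi> y"
proof -
  have lt: "Vfun L S \<pi> x - e < Sup {lossp L \<pi> y |y. y \<in> prob_simplex \<and> indist S y x}"
    using assms(2) by (simp add: Vfun_def)
  have ne: "{lossp L \<pi> y |y. y \<in> prob_simplex \<and> indist S y x} \<noteq> {}"
    using assms(1) indist_refl by blast
  show ?thesis
    using less_cSupD[OF ne lt] by blast
qed

lemma concave_on_Vfun:
  assumes \<pi>: "\<pi> \<in> prob_simplex"
  shows "concave_on prob_simplex (Vfun L S \<pi>)"
  unfolding concave_on_iff
proof (intro conjI convex_prob_simplex ballI allI impI)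
  fix x1 x2 :: "real^'z" and u v :: real
  assume x: "x1 \<in> prob_simplex" "x2 \<in> prob_simplex" and uv: "0 \<le> u" "0 \<le> v" "u + v = 1"
  show "u * Vfun L S \<pi> x1 + v * Vfun L S \<pi> x2 \<le> Vfun L S \<pi> (u *\<^sub>R x1 + v *\<^sub>R x2)"
  proof (rule field_le_epsilon)
    fix e :: real assume e: "0 < e"
    obtain y1 y2 where
      y1: "y1 \<in> prob_simplex" "indist S y1 x1" "Vfun L S \<pi> x1 - e < lossp L \<pi> y1" and
      y2: "y2 \<in> prob_simplex" "indist S y2 x2" "Vfun L S \<pi> x2 - e < lossp L \<pi> y2"
      using ex_indist_lossp_gt_Vfun[OF x(1) e] ex_indist_lossp_gt_Vfun[OF x(2) e] by blast
    have "u * (Vfun L S \<pi> x1 - e) + v * (Vfun L S \<pi> x2 - e) \<le> u * lossp L \<pi> y1 + v * lossp L \<pi> y2"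
      using y1(3) y2(3) uv by (intro add_mono mult_left_mono) auto
    also have "\<dots> = lossp L \<pi> (u *\<^sub>R y1 + v *\<^sub>R y2)"
      by (simp add: lossp_convex_comb)
    also have "\<dots> \<le> Vfun L S \<pi> (u *\<^sub>R x1 + v *\<^sub>R x2)"
      using convexD[OF convex_prob_simplex y1(1) y2(1) uv]
      by (intro lossp_le_Vfun[OF \<pi>] indist_convex_comb y1(2) y2(2))
    finally have "u * (Vfun L S \<pi> x1 - e) + v * (Vfun L S \<pi> x2 - e)
        \<le> Vfun L S \<pi> (u *\<^sub>R x1 + v *\<^sub>R x2)" .
    moreover have "u * (Vfun L S \<pi> x1 - e) + v * (Vfun L S \<pi> x2 - e)
        = u * Vfun L S \<pi> x1 + v * Vfun L S \<pi> x2 - (u + v) * e"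
      by (simp add: algebra_simps)
    ultimately show "u * Vfun L S \<pi> x1 + v * Vfun L S \<pi> x2 \<le> Vfun L S \<pi> (u *\<^sub>R x1 + v *\<^sub>R x2) + e"
      using uv(3) by simp
  qed
qed

lemma Vfun_nonneg: "\<pi> \<in> prob_simplex \<Longrightarrow> x \<in> prob_simplex \<Longrightarrow> 0 \<le> Vfun L S \<pi> x"
  using lossp_nonneg lossp_le_Vfun indist_refl order_trans by metis

lemma Vstar_le_Vfun:
  assumes "\<pi> \<in> prob_simplex" "x \<in> prob_simplex"
  shows "Vstar L S x \<le> Vfun L S \<pi> x"
  unfolding Vstar_def
proof (rule cInf_lower)
  show "bdd_below {Vfun L S \<pi> x |\<pi>. \<pi> \<in> (prob_simplex :: (real^'a) set)}"
    by (rule bdd_belowI[where m = 0]) (auto intro: Vfun_nonneg assms(2))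
qed (use assms(1) in blast)

lemma Delta_nonneg: "\<pi> \<in> prob_simplex \<Longrightarrow> x \<in> prob_simplex \<Longrightarrow> 0 \<le> Delta L S \<pi> x"
  using Vstar_le_Vfun by (simp add: Delta_def)

lemma continuous_on_Delta:
  assumes "x \<in> prob_simplex"
  shows "continuous_on prob_simplex (\<lambda>\<pi>::real^'a. Delta L S \<pi> x)"
proof (rule lipschitz_on_continuous_on)
  show "(real CARD('a))-lipschitz_on prob_simplex (\<lambda>\<pi>::real^'a. Delta L S \<pi> x)"
  proof (rule lipschitz_onI)
    fix p q :: "real^'a" assume "p \<in> prob_simplex" "q \<in> prob_simplex"
    then have "\<bar>Vfun L S p x - Vfun L S q x\<bar> \<le> l1dist p q"
      using Vfun_le_l1dist_plus[OF _ assms, of q p] Vfun_le_l1dist_plus[OF _ assms, of p q]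
        l1dist_commute[of p q] by (simp add: abs_le_iff)
    then show "dist (Delta L S p x) (Delta L S q x) \<le> real CARD('a) * dist p q"
      using l1dist_le_card_dist[of p q] by (simp add: dist_real_def Delta_def)
  qed simp
qed

lemma Delta_ge_away_from_Nset:
  assumes x: "x \<in> prob_simplex" and "0 < \<epsilon>"
  shows "\<exists>\<delta>>0. \<forall>\<pi>\<in>prob_simplex. \<epsilon> \<le> dist1 \<pi> (Nset L S x) \<longrightarrow> \<delta> \<le> Delta L S \<pi> x"
proof -
  let ?K = "prob_simplex \<inter> {\<pi>::real^'a. \<epsilon> \<le> dist1 \<pi> (Nset L S x)}"
  have "compact ?K"
    by (intro compact_Int_closed compact_prob_simplex
        closed_Collect_le continuous_on_const continuous_on_dist1)
  moreover have "continuous_on ?K (\<lambda>\<pi>. Delta L S \<pi> x)"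
    by (rule continuous_on_subset[OF continuous_on_Delta[OF x]]) blast
  moreover have "0 < Delta L S \<pi> x" if "\<pi> \<in> ?K" for \<pi>
  proof -
    have "\<pi> \<notin> Nset L S x"
      using that dist1_eq_0[of \<pi> "Nset L S x"] \<open>0 < \<epsilon>\<close> by auto
    then show ?thesis
      using that Delta_nonneg[of \<pi> x] x by (auto simp: Nset_def order_le_less)
  qed
  ultimately show ?thesis
    using continuous_on_compact_pos_lower_bound[of ?K] by blast
qed

lemma Delta_ge_away_from_NF:
  assumes "convex F" "F \<subseteq> prob_simplex" "F \<noteq> {}" "0 < \<epsilon>"
  shows "\<exists>x0\<in>rel_interior F. \<exists>\<delta>>0.
           \<forall>\<pi>\<in>prob_simplex. \<epsilon> \<le> dist1 \<pi> (NF L S F) \<longrightarrow> \<delta> \<le> Delta L S \<pi> x0"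
proof -
  define x0 where "x0 = (SOME x. x \<in> rel_interior F)"
  have "rel_interior F \<noteq> {}"
    using assms(1,3) by (simp add: rel_interior_eq_empty)
  then have x0: "x0 \<in> rel_interior F"
    unfolding x0_def by (metis ex_in_conv someI_ex)
  then have "x0 \<in> prob_simplex"
    using rel_interior_subset assms(2) by blast
  then obtain \<delta> where "0 < \<delta>"
    "\<forall>\<pi>\<in>prob_simplex. \<epsilon> \<le> dist1 \<pi> (Nset L S x0) \<longrightarrow> \<delta> \<le> Delta L S \<pi> x0"
    using Delta_ge_away_from_Nset[OF _ assms(4)] by blast
  moreover have "NF L S F = Nset L S x0"
    by (simp add: NF_def x0_def)
  ultimately show ?thesis
    using x0 by auto
qed

lemma concave_on_Delta_cell:
  assumes "is_rep L S m w" "\<alpha> < m" "\<pi> \<in> prob_simplex"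
  shows "concave_on (cell L S w \<alpha>) (Delta L S \<pi>)"
  unfolding concave_on_iff
proof (intro conjI polytope_imp_convex[OF polytope_cell[OF assms(1,2)]] ballI allI impI)
  fix x y :: "real^'z" and u v :: real
  assume xy: "x \<in> cell L S w \<alpha>" "y \<in> cell L S w \<alpha>" and uv: "0 \<le> u" "0 \<le> v" "u + v = 1"
  have comb: "u *\<^sub>R x + v *\<^sub>R y \<in> cell L S w \<alpha>"
    using convexD[OF polytope_imp_convex[OF polytope_cell[OF assms(1,2)]] xy uv] .
  have "u * Vfun L S \<pi> x + v * Vfun L S \<pi> y \<le> Vfun L S \<pi> (u *\<^sub>R x + v *\<^sub>R y)"
    using concave_on_Vfun[OF assms(3)] xy uv cell_subset_prob_simplex
    unfolding concave_on_iff by blast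
  then show "u * Delta L S \<pi> x + v * Delta L S \<pi> y \<le> Delta L S \<pi> (u *\<^sub>R x + v *\<^sub>R y)"
    using xy comb by (simp add: Delta_def cell_def inner_add_right algebra_simps)
qed

lemma cell_Delta_lower_bound:
  assumes rep: "is_rep L S m w" and \<alpha>: "\<alpha> < m" and "0 < \<epsilon>"
    and U: "\<Union> (faces_F L S m w - G) \<noteq> {}"
  shows "\<exists>c>0. \<forall>\<pi>\<in>{\<pi>\<in>prob_simplex. \<forall>F\<in>G. F \<noteq> {} \<longrightarrow> \<epsilon> \<le> dist1 \<pi> (NF L S F)}.
           \<forall>x\<in>cell L S w \<alpha>. c * dist1 x (\<Union> (faces_F L S m w - G)) \<le> Delta L S \<pi> x"
proof (rule polytope_concave_lower_bound[OF polytope_cell[OF rep \<alpha>]])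
  let ?U = "\<Union> (faces_F L S m w - G)"
  let ?Pol = "{\<pi>\<in>prob_simplex. \<forall>F\<in>G. F \<noteq> {} \<longrightarrow> \<epsilon> \<le> dist1 \<pi> (NF L S F)}"
  show "concave_on (cell L S w \<alpha>) (Delta L S \<pi>)" if "\<pi> \<in> ?Pol" for \<pi>
    using that by (intro concave_on_Delta_cell[OF rep \<alpha>]) simp
  show "0 \<le> Delta L S \<pi> x" if "\<pi> \<in> ?Pol" "x \<in> cell L S w \<alpha>" for \<pi> x
    using that cell_subset_prob_simplex[of L S w \<alpha>] by (intro Delta_nonneg) auto
  show "(real CARD('z))-lipschitz_on (cell L S w \<alpha>) (\<lambda>x. dist1 x ?U)"
    using lipschitz_on_dist1[OF U] by (rule lipschitz_on_subset) simp
  show "0 \<le> dist1 x ?U" for x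
    by (rule dist1_nonneg[OF U])
  fix F assume F: "F face_of cell L S w \<alpha>" "F \<noteq> {}"
  show "(\<forall>x\<in>F. dist1 x ?U = 0) \<or> (\<exists>x0\<in>rel_interior F. \<exists>\<delta>>0. \<forall>\<pi>\<in>?Pol. \<delta> \<le> Delta L S \<pi> x0)"
  proof (cases "F \<in> G")
    case False
    then have "F \<subseteq> ?U"
      using F(1) \<alpha> by (auto simp: faces_F_def)
    then have "\<forall>x\<in>F. dist1 x ?U = 0"
      by (simp add: dist1_eq_0 subset_iff)
    then show ?thesis ..
  next
    case True
    have "F \<subseteq> prob_simplex"
      using face_of_imp_subset[OF F(1)] cell_subset_prob_simplex by blast
    then obtain x0 \<delta> where "x0 \<in> rel_interior F" "0 < \<delta>"
      "\<forall>\<pi>\<in>prob_simplex. \<epsilon> \<le> dist1 \<pi> (NF L S F) \<longrightarrow> \<delta> \<le> Delta L S \<pi> x0"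
      using Delta_ge_away_from_NF[OF face_of_imp_convex[OF F(1)] _ F(2) \<open>0 < \<epsilon>\<close>] by blast
    then have "\<exists>x0\<in>rel_interior F. \<exists>\<delta>>0. \<forall>\<pi>\<in>?Pol. \<delta> \<le> Delta L S \<pi> x0"
      using True F(2) by blast
    then show ?thesis ..
  qed
qed

end

theorem lemma10:
  fixes L :: "'a::finite \<Rightarrow> 'z::finite \<Rightarrow> real" and S :: "'a \<Rightarrow> 'z \<Rightarrow> 's"
    and m :: nat and w :: "nat \<Rightarrow> real^'z"
    and \<epsilon> :: real and G :: "(real^'z) set set"
  assumes L01: "\<forall>a z. 0 \<le> L a z \<and> L a z \<le> 1"
    and rep: "min_rep L S m w"
    and eps: "\<epsilon> > 0"
    and GF: "G \<subseteq> faces_F L S m w"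
    and Une: "\<Union> (faces_F L S m w - G) \<noteq> {}"
  shows "\<exists>c>0. \<forall>x\<in>prob_simplex.
     (INF \<pi>\<in>{\<pi>\<in>prob_simplex. \<forall>F\<in>G. F \<noteq> {} \<longrightarrow> \<epsilon> \<le> dist1 \<pi> (NF L S F)}.
        ereal (Delta L S \<pi> x))
     \<ge> ereal (c * dist1 x (\<Union> (faces_F L S m w - G)))"
proof -
  let ?U = "\<Union> (faces_F L S m w - G)"
  let ?Pol = "{\<pi>\<in>prob_simplex. \<forall>F\<in>G. F \<noteq> {} \<longrightarrow> \<epsilon> \<le> dist1 \<pi> (NF L S F)}"
  have rep': "is_rep L S m w"
    using rep by (simp add: min_rep_def)
  obtain c where c: "0 < c"
    "\<forall>\<alpha>\<in>{..<m}. \<forall>\<pi>\<in>?Pol. \<forall>x\<in>cell L S w \<alpha>. c * dist1 x ?U \<le> Delta L S \<pi> x"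
    using finite_family_lower_bound[of "{..<m}" ?Pol "cell L S w" "\<lambda>x. dist1 x ?U" "Delta L S"]
      cell_Delta_lower_bound[OF L01 rep' _ eps Une] dist1_nonneg[OF Une] by auto
  have "ereal (c * dist1 x ?U) \<le> (INF \<pi>\<in>?Pol. ereal (Delta L S \<pi> x))"
    if x: "x \<in> prob_simplex" for x
  proof -
    obtain \<alpha> where "\<alpha> < m" "x \<in> cell L S w \<alpha>"
      using ex_cell[OF rep' x] by blast
    then show ?thesis
      using c(2) by (intro INF_greatest) auto
  qed
  then show ?thesis
    using c(1) by blast
qed

end
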